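(* There is an absolute constant $C>0$ such that for every degree sequence $\mathbf d=(d_1,\ldots,d_n)$ and every $v\in[n]$, \[\mathbb P(\mathfrak t_n(v)=0)\le C\Big(d_v\,\frac{\mathbb E[\mathfrak s_n(v)]}{n}+d_v\,n\,\mathbb P(\mathfrak s_n(v)>n/2)\Big).\]
   Context: A degree sequence is $\mathbf d=(d_1,\ldots,d_n)\in\mathbb N_0^n$ with $\sum_j d_j=n$. Let $\mathfrak F(\mathbf d)=\{f:[n]\to[n]: |f^{-1}(\{i\})|=d_i\ \forall i\}$ and $F$ uniform on $\mathfrak F(\mathbf d)$. For $f:V\to V$, $v\in V$: six-length $\mathfrak s_f(v)=\min\{k\in\mathbb N: f^{(k)}(v)\in\{f^{(j)}(v):0\le j\le k-1\}\}$ ($f^{(k)}$ the $k$-fold composition, $f^{(0)}=\mathrm{id}$); tail-length $\mathfrak t_f(v)$ is the unique integer with $0\le\mathfrak t_f(v)<\mathfrak s_f(v)$ and $f^{(\mathfrak s_f(v))}(v)=f^{(\mathfrak t_f(v))}(v)$. $\mathfrak s_n(v)=\mathfrak s_F(v)$, $\mathfrak t_n(v)=\mathfrak t_F(v)$. *)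

theory Defs
  imports Complex_Main "HOL-Library.FuncSet"
begin

definition fdeg :: "nat \<Rightarrow> (nat \<Rightarrow> nat) \<Rightarrow> (nat \<Rightarrow> nat) set" where
  "fdeg n d = {f \<in> {1..n} \<rightarrow>\<^sub>E {1..n}. \<forall>i\<in>{1..n}. card {j\<in>{1..n}. f j = i} = d i}"

definition sixlen :: "('a \<Rightarrow> 'a) \<Rightarrow> 'a \<Rightarrow> nat" where
  "sixlen f v = (LEAST k. k \<ge> 1 \<and> (f ^^ k) v \<in> {(f ^^ j) v | j. j \<le> k - 1})"

definition taillen :: "('a \<Rightarrow> 'a) \<Rightarrow> 'a \<Rightarrow> nat" where
  "taillen f v = (THE t. t < sixlen f v \<and> (f ^^ sixlen f v) v = (f ^^ t) v)"

definition probF :: "nat \<Rightarrow> (nat \<Rightarrow> nat) \<Rightarrow> ((nat \<Rightarrow> nat) \<Rightarrow> bool) \<Rightarrow> real" where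
  "probF n d P = real (card {f \<in> fdeg n d. P f}) / real (card (fdeg n d))"

definition expF :: "nat \<Rightarrow> (nat \<Rightarrow> nat) \<Rightarrow> ((nat \<Rightarrow> nat) \<Rightarrow> real) \<Rightarrow> real" where
  "expF n d X = (\<Sum>f\<in>fdeg n d. X f) / real (card (fdeg n d))"

end

theory Submission
  imports Defs "HOL-Combinatorics.Transposition"
begin

text \<open>
  Let \<open>v\<close> lie on a cycle of \<open>f\<close> of length \<open>k\<close> (six-length \<open>k\<close>, tail-length \<open>0\<close>) and let \<open>u\<close> be
  the last vertex of that cycle.  For every \<open>j\<close> off the first \<open>k - 1\<close> vertices of the path from \<open>v\<close>,
  exchanging the images of \<open>u\<close> and \<open>j\<close> gives a function \<open>g\<close> with the same in-degrees, with
  \<open>g j = v\<close>, whose path from \<open>v\<close> still has \<open>k\<close> distinct vertices.  As \<open>u\<close> is the \<open>(k - 1)\<close>-th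
  vertex of that path, the same exchange turns \<open>g\<close> back into \<open>f\<close>; so \<open>(f, j) \<mapsto> (g, j)\<close> is
  injective, which yields the switching inequality
  \<open>(n - k + 1) \<cdot> #{s = k, t = 0} \<le> d v \<cdot> #{s \<ge> k}\<close>.  For \<open>k \<le> n/2\<close> this bounds \<open>#{s = k, t = 0}\<close>
  by \<open>2 d v #{s \<ge> k} / n\<close>, for \<open>k > n/2\<close> by \<open>d v #{s > n/2}\<close>; summing over \<open>k\<close> and using
  \<open>\<Sum>\<^sub>k #{s \<ge> k} = \<Sum>\<^sub>f s(f)\<close> gives the claim with \<open>C = 2\<close>.
\<close>

lemma sixlen_altdef: "sixlen f v = (LEAST k. 0 < k \<and> (\<exists>j<k. (f ^^ k) v = (f ^^ j) v))"
proof -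
  have "j \<le> k - 1 \<longleftrightarrow> j < k" if "1 \<le> k" for j k :: nat
    using that by linarith
  then show ?thesis
    unfolding sixlen_def by (intro arg_cong[where f = Least] ext) auto
qed

lemma funpow_inj_on_lessThan_sixlen: "inj_on (\<lambda>i. (f ^^ i) v) {..<sixlen f v}"
proof (rule linorder_inj_onI')
  fix i j assume "i < j" "j \<in> {..<sixlen f v}"
  then show "(f ^^ i) v \<noteq> (f ^^ j) v"
    using not_less_Least[of j "\<lambda>k. 0 < k \<and> (\<exists>j<k. (f ^^ k) v = (f ^^ j) v)"]
    by (auto simp: sixlen_altdef)
qed

lemma sixlen_returns:
  assumes "finite (range (\<lambda>i. (f ^^ i) v))"
  shows "0 < sixlen f v" "\<exists>j<sixlen f v. (f ^^ sixlen f v) v = (f ^^ j) v"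
proof -
  have "\<not> inj (\<lambda>i. (f ^^ i) v)"
    using assms finite_imageD by blast
  then obtain i j where "i < j" "(f ^^ j) v = (f ^^ i) v"
    by (metis linorder_injI)
  then have "\<exists>k>0. \<exists>j<k. (f ^^ k) v = (f ^^ j) v"
    by (intro exI[of _ j] conjI exI[of _ i]) auto
  from LeastI_ex[OF this] show "0 < sixlen f v" "\<exists>j<sixlen f v. (f ^^ sixlen f v) v = (f ^^ j) v"
    unfolding sixlen_altdef by auto
qed

lemma le_sixlenI:
  assumes "finite (range (\<lambda>i. (f ^^ i) v))" and "inj_on (\<lambda>i. (f ^^ i) v) {..<k}"
  shows "k \<le> sixlen f v"
proof (rule ccontr)
  assume "\<not> k \<le> sixlen f v"
  moreover obtain j where "j < sixlen f v" "(f ^^ sixlen f v) v = (f ^^ j) v"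
    using sixlen_returns[OF assms(1)] by blast
  ultimately show False
    using inj_onD[OF assms(2), of "sixlen f v" j] by auto
qed

lemma taillen_eq_0_iff:
  assumes "finite (range (\<lambda>i. (f ^^ i) v))"
  shows "taillen f v = 0 \<longleftrightarrow> (f ^^ sixlen f v) v = v"
proof -
  let ?P = "\<lambda>t. t < sixlen f v \<and> (f ^^ sixlen f v) v = (f ^^ t) v"
  have unique: "\<exists>!t. ?P t"
  proof (rule ex_ex1I)
    show "\<exists>t. ?P t"
      using sixlen_returns(2)[OF assms] by blast
    show "t = t'" if "?P t" "?P t'" for t t'
      using that by (intro inj_onD[OF funpow_inj_on_lessThan_sixlen[of f v]]) auto
  qed
  then have "?P (taillen f v)"
    unfolding taillen_def by (rule theI')
  moreover have "taillen f v = 0" if "?P 0"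
    unfolding taillen_def using unique that by (rule the1_equality)
  ultimately show ?thesis
    using sixlen_returns(1)[OF assms] by auto
qed

lemma funpow_mem: "f ` A \<subseteq> A \<Longrightarrow> v \<in> A \<Longrightarrow> (f ^^ i) v \<in> A"
  by (induction i) auto

lemma finite_orbit: "finite A \<Longrightarrow> f ` A \<subseteq> A \<Longrightarrow> v \<in> A \<Longrightarrow> finite (range (\<lambda>i. (f ^^ i) v))"
  by (auto intro: finite_subset funpow_mem)

lemma sixlen_le_card:
  assumes "finite A" "f ` A \<subseteq> A" "v \<in> A"
  shows "sixlen f v \<le> card A"
  using card_inj_on_le[OF funpow_inj_on_lessThan_sixlen _ assms(1)] funpow_mem[OF assms(2,3)]
  by fastforce

lemma funpow_comp_transpose_eq:
  assumes "\<forall>i<m. (f ^^ i) v \<noteq> a \<and> (f ^^ i) v \<noteq> b" "i \<le> m"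
  shows "((f \<circ> transpose a b) ^^ i) v = (f ^^ i) v"
  using assms(2) by (induction i) (use assms(1) in auto)

lemma fdeg_image_subset: "f \<in> fdeg n d \<Longrightarrow> f ` {1..n} \<subseteq> {1..n}"
  unfolding fdeg_def by auto

lemma finite_fdeg: "finite (fdeg n d)"
  by (rule finite_subset[of _ "{1..n} \<rightarrow>\<^sub>E {1..n}"]) (auto simp: fdeg_def intro: finite_PiE)

lemma card_fiber_fdeg: "f \<in> fdeg n d \<Longrightarrow> i \<in> {1..n} \<Longrightarrow> card {j\<in>{1..n}. f j = i} = d i"
  unfolding fdeg_def by blast

lemma fdeg_comp_transpose:
  assumes f: "f \<in> fdeg n d" and ab: "a \<in> {1..n}" "b \<in> {1..n}"
  shows "f \<circ> transpose a b \<in> fdeg n d"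
proof -
  have "f \<circ> transpose a b \<in> {1..n} \<rightarrow>\<^sub>E {1..n}"
    using f ab unfolding fdeg_def by (auto simp: transpose_def PiE_def extensional_def Pi_def)
  moreover have "{j\<in>{1..n}. (f \<circ> transpose a b) j = i} = transpose a b ` {j\<in>{1..n}. f j = i}" for i
    using ab by (auto simp: in_transpose_image_iff transpose_def)
  ultimately show ?thesis
    using f by (simp add: fdeg_def card_image inj_on_subset[OF inj_transpose])
qed

lemma fdeg_finite_orbit: "f \<in> fdeg n d \<Longrightarrow> v \<in> {1..n} \<Longrightarrow> finite (range (\<lambda>i. (f ^^ i) v))"
  by (rule finite_orbit[OF finite_atLeastAtMost fdeg_image_subset])

lemma fdeg_sixlen_le: "f \<in> fdeg n d \<Longrightarrow> v \<in> {1..n} \<Longrightarrow> sixlen f v \<le> n"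
  using sixlen_le_card[OF finite_atLeastAtMost fdeg_image_subset, of f n d v] by simp

lemma rewire_cycle:
  assumes f: "f \<in> fdeg n d" and v: "v \<in> {1..n}"
    and cyc: "sixlen f v = k" "taillen f v = 0"
    and j: "j \<in> {1..n} - (\<lambda>i. (f ^^ i) v) ` {..<k - 1}"
  defines "u \<equiv> (f ^^ (k - 1)) v"
  defines "g \<equiv> f \<circ> transpose u j"
  shows "g \<in> fdeg n d" "k \<le> sixlen g v" "g j = v" "f = g \<circ> transpose ((g ^^ (k - 1)) v) j"
proof -
  have orbit: "finite (range (\<lambda>i. (f ^^ i) v))"
    by (rule fdeg_finite_orbit[OF f v])
  obtain m where k: "k = Suc m"
    using sixlen_returns(1)[OF orbit] cyc(1) gr0_implies_Suc by blast
  have inj: "inj_on (\<lambda>i. (f ^^ i) v) {..<k}"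
    using funpow_inj_on_lessThan_sixlen[of f v] cyc(1) by simp
  have "(f ^^ i) v \<noteq> u" if "i < k - 1" for i
  proof
    assume "(f ^^ i) v = u"
    then have "i = k - 1"
      using inj_onD[OF inj, of i "k - 1"] that k unfolding u_def by simp
    with that show False by simp
  qed
  moreover have "(f ^^ i) v \<noteq> j" if "i < k - 1" for i
    using j that by auto
  ultimately have path: "(g ^^ i) v = (f ^^ i) v" if "i \<le> k - 1" for i
    unfolding g_def using that by (intro funpow_comp_transpose_eq) auto
  have "u \<in> {1..n}"
    unfolding u_def by (rule funpow_mem[OF fdeg_image_subset[OF f] v])
  with j show g: "g \<in> fdeg n d"
    unfolding g_def by (intro fdeg_comp_transpose[OF f]) auto
  have "inj_on (\<lambda>i. (g ^^ i) v) {..<k} = inj_on (\<lambda>i. (f ^^ i) v) {..<k}"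
    using path k by (intro inj_on_cong) simp
  with inj have "inj_on (\<lambda>i. (g ^^ i) v) {..<k}"
    by simp
  then show "k \<le> sixlen g v"
    by (rule le_sixlenI[OF fdeg_finite_orbit[OF g v]])
  have "f u = (f ^^ k) v"
    unfolding u_def k by simp
  then show "g j = v"
    using taillen_eq_0_iff[OF orbit] cyc by (simp add: g_def)
  show "f = g \<circ> transpose ((g ^^ (k - 1)) v) j"
    using path[of "k - 1"] by (simp add: g_def u_def comp_assoc)
qed

lemma card_cycle_switching:
  assumes v: "v \<in> {1..n}"
  shows "(n - (k - 1)) * card {f \<in> fdeg n d. sixlen f v = k \<and> taillen f v = 0}
           \<le> d v * card {g \<in> fdeg n d. k \<le> sixlen g v}"
proof -
  define B where "B = {f \<in> fdeg n d. sixlen f v = k \<and> taillen f v = 0}"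
  define A where "A = {g \<in> fdeg n d. k \<le> sixlen g v}"
  define J where "J f = {1..n} - (\<lambda>i. (f ^^ i) v) ` {..<k - 1}" for f :: "nat \<Rightarrow> nat"
  define rewire where "rewire = (\<lambda>(f, j). (f \<circ> transpose ((f ^^ (k - 1)) v) j, j))"
  have finite_B: "finite B" and finite_A: "finite A"
    unfolding A_def B_def by (auto intro: finite_subset[OF _ finite_fdeg])
  have card_J: "card (J f) = n - (k - 1)" if "f \<in> B" for f
  proof -
    have "inj_on (\<lambda>i. (f ^^ i) v) {..<k - 1}"
      using that funpow_inj_on_lessThan_sixlen[of f v] unfolding B_def
      by (auto intro: inj_on_subset)
    moreover have "(\<lambda>i. (f ^^ i) v) ` {..<k - 1} \<subseteq> {1..n}"
      using that funpow_mem[OF fdeg_image_subset v] unfolding B_def by blast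
    ultimately show ?thesis
      unfolding J_def by (simp add: card_Diff_subset card_image finite_subset)
  qed
  have inj: "inj_on rewire (Sigma B J)"
  proof (rule inj_on_inverseI, clarify)
    fix f j assume "f \<in> B" "j \<in> J f"
    then have "f \<circ> transpose ((f ^^ (k - 1)) v) j
        \<circ> transpose (((f \<circ> transpose ((f ^^ (k - 1)) v) j) ^^ (k - 1)) v) j = f"
      unfolding B_def J_def by (intro rewire_cycle(4)[OF _ v, symmetric]) auto
    then show "rewire (rewire (f, j)) = (f, j)"
      unfolding rewire_def by simp
  qed
  have image: "rewire ` Sigma B J \<subseteq> Sigma A (\<lambda>g. {j \<in> {1..n}. g j = v})"
    using rewire_cycle(1-3)[OF _ v] unfolding rewire_def A_def B_def J_def by fastforce
  have "(n - (k - 1)) * card B = card (Sigma B J)"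
    using finite_B card_J by (simp add: J_def)
  also have "\<dots> \<le> card (Sigma A (\<lambda>g. {j \<in> {1..n}. g j = v}))"
    using finite_A by (intro card_inj_on_le[OF inj image]) simp
  also have "\<dots> = (\<Sum>g\<in>A. d v)"
    using finite_A card_fiber_fdeg[of _ n d v] v unfolding A_def by (auto intro: sum.cong)
  also have "\<dots> = d v * card A"
    by simp
  finally show ?thesis
    unfolding A_def B_def .
qed

lemma sum_eq_sum_card_le:
  fixes h :: "'a \<Rightarrow> nat"
  assumes "finite F" and "\<And>x. x \<in> F \<Longrightarrow> h x \<le> n"
  shows "(\<Sum>x\<in>F. h x) = (\<Sum>k\<in>{1..n}. card {x \<in> F. k \<le> h x})"
proof -
  have "(\<Sum>x\<in>F. h x) = (\<Sum>x\<in>F. card {k \<in> {1..n}. k \<le> h x})"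
  proof (rule sum.cong[OF refl])
    fix x assume "x \<in> F"
    then have "{k \<in> {1..n}. k \<le> h x} = {1..h x}"
      using assms(2)[of x] by auto
    then show "h x = card {k \<in> {1..n}. k \<le> h x}"
      by simp
  qed
  also have "\<dots> = (\<Sum>x\<in>F. \<Sum>k\<in>{1..n}. if k \<le> h x then 1 else 0)"
    by (simp only: card_eq_sum sum.inter_filter[OF finite_atLeastAtMost])
  also have "\<dots> = (\<Sum>k\<in>{1..n}. card {x \<in> F. k \<le> h x})"
    by (subst sum.swap) (simp only: card_eq_sum sum.inter_filter[OF assms(1)])
  finally show ?thesis .
qed

lemma card_cycle_le:
  assumes v: "v \<in> {1..n}" and k: "k \<in> {1..n}"
  shows "real (card {f \<in> fdeg n d. sixlen f v = k \<and> taillen f v = 0})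
    \<le> 2 * real (d v) * real (card {g \<in> fdeg n d. k \<le> sixlen g v}) / real n
      + real (d v) * real (card {g \<in> fdeg n d. real n / 2 < real (sixlen g v)})"
    (is "?b \<le> 2 * ?d * ?a / real n + ?d * ?s")
proof -
  have switch: "real (n - (k - 1)) * ?b \<le> ?d * ?a"
    unfolding of_nat_mult[symmetric] of_nat_le_iff by (rule card_cycle_switching[OF v])
  show ?thesis
  proof (cases "2 * k \<le> n")
    case True
    then have "real n \<le> 2 * real (n - (k - 1))"
      by linarith
    then have "real n * ?b \<le> 2 * real (n - (k - 1)) * ?b"
      by (rule mult_right_mono) simp
    also have "\<dots> \<le> 2 * (?d * ?a)"
      using switch by (simp add: mult.assoc)
    finally have "?b \<le> 2 * ?d * ?a / real n"
      using k by (simp add: pos_le_divide_eq mult.commute)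
    then show ?thesis
      by (rule add_increasing2[rotated]) simp
  next
    case False
    have "real n / 2 < real (sixlen g v)" if "k \<le> sixlen g v" for g
    proof -
      have "real n < real (2 * sixlen g v)"
        using False that by (simp only: of_nat_less_iff)
      then show ?thesis
        by simp
    qed
    then have "{g \<in> fdeg n d. k \<le> sixlen g v} \<subseteq> {g \<in> fdeg n d. real n / 2 < real (sixlen g v)}"
      by blast
    then have "?a \<le> ?s"
      by (simp add: card_mono finite_fdeg)
    have "?b \<le> real (n - (k - 1)) * ?b"
      using k by (simp add: mult_le_cancel_right1)
    also have "\<dots> \<le> ?d * ?a"
      by (rule switch)
    also have "\<dots> \<le> ?d * ?s"
      using \<open>?a \<le> ?s\<close> by (simp add: mult_left_mono)
    finally show ?thesis
      by (rule add_increasing[rotated]) simp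
  qed
qed

lemma card_taillen_eq_0_le:
  assumes v: "v \<in> {1..n}"
  shows "real (card {f \<in> fdeg n d. taillen f v = 0})
    \<le> 2 * real (d v) * (\<Sum>f\<in>fdeg n d. real (sixlen f v)) / real n
      + real n * real (d v) * real (card {f \<in> fdeg n d. real n / 2 < real (sixlen f v)})"
    (is "_ \<le> 2 * ?d * ?E / real n + real n * ?d * ?s")
proof -
  let ?T = "{f \<in> fdeg n d. taillen f v = 0}"
  let ?A = "\<lambda>k. real (card {g \<in> fdeg n d. k \<le> sixlen g v})"
  have sixlen_range: "(\<lambda>f. sixlen f v) ` ?T \<subseteq> {1..n}"
    using fdeg_sixlen_le[OF _ v] sixlen_returns(1)[OF fdeg_finite_orbit[OF _ v]]
    by (auto simp: Suc_le_eq)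
  have "card ?T = (\<Sum>k\<in>{1..n}. card {f \<in> ?T. sixlen f v = k})"
    unfolding card_eq_sum
    by (rule sum.group[OF _ finite_atLeastAtMost sixlen_range, symmetric])
      (auto intro: finite_subset[OF _ finite_fdeg])
  also have "\<dots> = (\<Sum>k\<in>{1..n}. card {f \<in> fdeg n d. sixlen f v = k \<and> taillen f v = 0})"
    by (intro sum.cong refl arg_cong[where f = card]) auto
  finally have "real (card ?T) = (\<Sum>k\<in>{1..n}. real (card {f \<in> fdeg n d. sixlen f v = k \<and> taillen f v = 0}))"
    by simp
  also have "\<dots> \<le> (\<Sum>k\<in>{1..n}. 2 * ?d * ?A k / real n + ?d * ?s)"
    by (intro sum_mono card_cycle_le[OF v])
  also have "\<dots> = 2 * ?d * (\<Sum>k\<in>{1..n}. ?A k) / real n + real n * ?d * ?s"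
    by (simp add: sum.distrib sum_distrib_left sum_divide_distrib)
  also have "(\<Sum>k\<in>{1..n}. ?A k) = ?E"
    using sum_eq_sum_card_le[OF finite_fdeg[of n d] fdeg_sixlen_le[OF _ v]]
    by (simp flip: of_nat_sum)
  finally show ?thesis .
qed

lemma probF_taillen_eq_0_le:
  assumes v: "v \<in> {1..n}"
  shows "probF n d (\<lambda>f. taillen f v = 0)
    \<le> 2 * (real (d v) * expF n d (\<lambda>f. real (sixlen f v)) / real n
      + real (d v) * real n * probF n d (\<lambda>f. real (sixlen f v) > real n / 2))"
proof -
  let ?N = "real (card (fdeg n d))"
  let ?E = "\<Sum>f\<in>fdeg n d. real (sixlen f v)"
  let ?s = "real (card {f \<in> fdeg n d. real n / 2 < real (sixlen f v)})"
  have double_add_le: "2 * a + b \<le> 2 * (a + b)" if "0 \<le> b" for a b :: real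
    using that by simp
  have "probF n d (\<lambda>f. taillen f v = 0) = real (card {f \<in> fdeg n d. taillen f v = 0}) / ?N"
    by (simp add: probF_def)
  also have "\<dots> \<le> (2 * real (d v) * ?E / real n + real n * real (d v) * ?s) / ?N"
    by (rule divide_right_mono[OF card_taillen_eq_0_le[OF v]]) simp
  also have "\<dots> = 2 * (real (d v) * (?E / ?N) / real n) + real (d v) * real n * (?s / ?N)"
    by (simp add: add_divide_distrib mult_ac)
  also have "\<dots> \<le> 2 * (real (d v) * (?E / ?N) / real n + real (d v) * real n * (?s / ?N))"
    by (rule double_add_le) simp
  finally show ?thesis
    by (simp only: expF_def probF_def)
qed

theorem lemma3p13:
  "\<exists>C::real. C > 0 \<and>
    (\<forall>(n::nat) (d::nat \<Rightarrow> nat) (v::nat).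
      (\<Sum>j\<in>{1..n}. d j) = n \<longrightarrow> v \<in> {1..n} \<longrightarrow>
      probF n d (\<lambda>f. taillen f v = 0)
        \<le> C * (real (d v) * expF n d (\<lambda>f. real (sixlen f v)) / real n
               + real (d v) * real n * probF n d (\<lambda>f. real (sixlen f v) > real n / 2)))"
  using probF_taillen_eq_0_le by (intro exI[of _ 2]) simp

end
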